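(* In the setting described in the context, assume $$\sum_{x\in A}\alpha_x<\sum_{y\in N(A)}\beta_y\qquad\text{for all nonempty } A\subseteq\mathcal X,$$ where $N(A)=\bigcup_{x\in A}N_x$. Then $W(t)$, restricted to the set $\mathcal W$ of allocation states, is an ergodic time-reversible Markov process whose unique invariant probability measure is $$\mu_\gamma(W)=\frac{\binom{\alpha}{W}e^{\gamma\Psi(W)}}{\sum_{W'\in\mathcal W}\binom{\alpha}{W'}e^{\gamma\Psi(W')}},\qquad W\in\mathcal W,$$ where $\binom{\alpha}{W}=\frac{\prod_x\alpha_x!}{\prod_{x,y}W_{xy}!}$ and $\Psi(W)=\sum_{y}\sum_{s=0}^{W_y}[\lambda_y-k_cs/\beta_y]+k_a\sum_{x,y}\sum_{s=0}^{W_{xy}}s$.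
   Context: $\mathcal X$ is a finite set of units, $\mathcal G=(\mathcal X,\mathcal E)$ a directed graph, $N_x=\{y:(x,y)\in\mathcal E\}$, $\alpha_x,\beta_x$ non-negative integers. A partial allocation state is a matrix $W\in\mathbb N^{\mathcal X\times\mathcal X}$ with $W_{xy}=0$ whenever $(x,y)\notin\mathcal E$, $W^x:=\sum_yW_{xy}\le\alpha_x$, $W_y:=\sum_xW_{xy}\le\beta_y$; it is an allocation state if $W^x=\alpha_x$ for all $x$; $\mathcal W_p,\mathcal W$ denote these sets; $e_{xy}$ is the matrix unit. Fix reals $\lambda_y$, $k_c,k_a\ge0$, $\gamma>0$, and let $f_{xy}(W)=\lambda_y-k_cW_y/\beta_y+k_aW_{xy}$ (in $\Psi$ the $s=0$ term contributes $\lambda_y$). Let $\mathcal X^x(W)=\{y\in N_x:W_y<\beta_y\}$ and $p_y(W,x)=e^{\gamma f_{xy}(W+e_{xy})}/\sum_{y'\in\mathcal X^x(W)}e^{\gamma f_{xy'}(W+e_{xy'})}$. Let $P_{\rm all}(W,x),P_{\rm dis}(W,x)\ge0$ with sum $1$, $P_{\rm all}(W,x)=0$ if $W^x=\alpha_x$, $P_{\rm dis}(W,x)=0$ if $W^x=0$. $W(t)$ is the continuous-time Markov process on $\mathcal W_p$ in which each unit $x$ activates at the times of an independent Poisson clock of rate $\nu_x$, where (standing assumption of the paper) $\nu_x=\nu\alpha_x$ for some $\nu>0$; upon activation in state $W$, with probability $P_{\rm all}(W,x)$ unit $x$ chooses $y^*\in\mathcal X^x(W)$ with probability $p_{y^*}(W,x)$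 and the state becomes $W+e_{xy^*}$ (nothing happens if $\mathcal X^x(W)=\emptyset$); with probability $P_{\rm dis}(W,x)$ it chooses $\bar y$ with probability $W_{x\bar y}/W^x$, then $y^*\in\mathcal X^x(W-e_{x\bar y})$ with probability $p_{y^*}(W-e_{x\bar y},x)$, and the state becomes $W-e_{x\bar y}+e_{xy^*}$. From an allocation state only distribution moves occur, so $\mathcal W$ is closed under the dynamics. *)

theory Defs
  imports Main Complex_Main
begin

type_synonym 'a mat = "'a \<Rightarrow> 'a \<Rightarrow> nat"

definition eunit :: "'a \<Rightarrow> 'a \<Rightarrow> 'a mat" where
  "eunit x y = (\<lambda>a b. if a = x \<and> b = y then 1 else 0)"

definition madd :: "'a mat \<Rightarrow> 'a mat \<Rightarrow> 'a mat" where
  "madd W V = (\<lambda>a b. W a b + V a b)"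

definition msub :: "'a mat \<Rightarrow> 'a mat \<Rightarrow> 'a mat" where
  "msub W V = (\<lambda>a b. W a b - V a b)"

definition nbhd :: "('a \<times> 'a) set \<Rightarrow> 'a \<Rightarrow> 'a set" where
  "nbhd E x = {y. (x, y) \<in> E}"

definition nbhd_set :: "('a \<times> 'a) set \<Rightarrow> 'a set \<Rightarrow> 'a set" where
  "nbhd_set E A = (\<Union>x\<in>A. nbhd E x)"

definition rowsum :: "'a set \<Rightarrow> 'a mat \<Rightarrow> 'a \<Rightarrow> nat" where
  "rowsum X W x = (\<Sum>y\<in>X. W x y)"

definition colsum :: "'a set \<Rightarrow> 'a mat \<Rightarrow> 'a \<Rightarrow> nat" where
  "colsum X W y = (\<Sum>x\<in>X. W x y)"

definition partial_states ::
  "'a set \<Rightarrow> ('a \<times> 'a) set \<Rightarrow> ('a \<Rightarrow> nat) \<Rightarrow> ('a \<Rightarrow> nat) \<Rightarrow> 'a mat set" where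
  "partial_states X E \<alpha> \<beta> =
     {W. (\<forall>x y. (x, y) \<notin> E \<longrightarrow> W x y = 0)
        \<and> (\<forall>x\<in>X. rowsum X W x \<le> \<alpha> x)
        \<and> (\<forall>y\<in>X. colsum X W y \<le> \<beta> y)}"

definition alloc_states ::
  "'a set \<Rightarrow> ('a \<times> 'a) set \<Rightarrow> ('a \<Rightarrow> nat) \<Rightarrow> ('a \<Rightarrow> nat) \<Rightarrow> 'a mat set" where
  "alloc_states X E \<alpha> \<beta> =
     {W \<in> partial_states X E \<alpha> \<beta>. \<forall>x\<in>X. rowsum X W x = \<alpha> x}"

definition avail ::
  "'a set \<Rightarrow> ('a \<times> 'a) set \<Rightarrow> ('a \<Rightarrow> nat) \<Rightarrow> 'a mat \<Rightarrow> 'a \<Rightarrow> 'a set" where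
  "avail X E \<beta> W x = {y \<in> nbhd E x. colsum X W y < \<beta> y}"

definition fval ::
  "'a set \<Rightarrow> ('a \<Rightarrow> nat) \<Rightarrow> ('a \<Rightarrow> real) \<Rightarrow> real \<Rightarrow> real \<Rightarrow> 'a \<Rightarrow> 'a \<Rightarrow> 'a mat \<Rightarrow> real" where
  "fval X \<beta> lam kc ka x y W =
     lam y - kc * real (colsum X W y) / real (\<beta> y) + ka * real (W x y)"

definition pchoice ::
  "'a set \<Rightarrow> ('a \<times> 'a) set \<Rightarrow> ('a \<Rightarrow> nat) \<Rightarrow> ('a \<Rightarrow> real) \<Rightarrow> real \<Rightarrow> real \<Rightarrow> real
    \<Rightarrow> 'a mat \<Rightarrow> 'a \<Rightarrow> 'a \<Rightarrow> real" where
  "pchoice X E \<beta> lam kc ka \<gamma> W x y =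
     exp (\<gamma> * fval X \<beta> lam kc ka x y (madd W (eunit x y))) /
     (\<Sum>y'\<in>avail X E \<beta> W x. exp (\<gamma> * fval X \<beta> lam kc ka x y' (madd W (eunit x y'))))"

text \<open>Transition rate q(W, W') of the continuous-time Markov process W(t):
unit x activates at rate nu * alpha_x; it then performs an allocation move
(probability P_all) or a distribution move (probability P_dis), as described.
Only meaningful for W' different from W.\<close>
definition rate ::
  "'a set \<Rightarrow> ('a \<times> 'a) set \<Rightarrow> ('a \<Rightarrow> nat) \<Rightarrow> ('a \<Rightarrow> nat) \<Rightarrow> ('a \<Rightarrow> real) \<Rightarrow> real \<Rightarrow> real
    \<Rightarrow> real \<Rightarrow> real \<Rightarrow> ('a mat \<Rightarrow> 'a \<Rightarrow> real) \<Rightarrow> ('a mat \<Rightarrow> 'a \<Rightarrow> real)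
    \<Rightarrow> 'a mat \<Rightarrow> 'a mat \<Rightarrow> real" where
  "rate X E \<alpha> \<beta> lam kc ka \<gamma> \<nu> Pall Pdis W W' =
     (\<Sum>x\<in>X. \<nu> * real (\<alpha> x) *
        ( Pall W x *
            (\<Sum>ys\<in>avail X E \<beta> W x.
               (if madd W (eunit x ys) = W' then pchoice X E \<beta> lam kc ka \<gamma> W x ys else 0))
        + Pdis W x *
            (\<Sum>yb\<in>X. (real (W x yb) / real (rowsum X W x)) *
               (\<Sum>ys\<in>avail X E \<beta> (msub W (eunit x yb)) x.
                  (if madd (msub W (eunit x yb)) (eunit x ys) = W'
                   then pchoice X E \<beta> lam kc ka \<gamma> (msub W (eunit x yb)) x ys else 0)))))"

definition Psi ::
  "'a set \<Rightarrow> ('a \<Rightarrow> nat) \<Rightarrow> ('a \<Rightarrow> real) \<Rightarrow> real \<Rightarrow> real \<Rightarrow> 'a mat \<Rightarrow> real" where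
  "Psi X \<beta> lam kc ka W =
     (\<Sum>y\<in>X. \<Sum>s=0..colsum X W y. lam y - kc * real s / real (\<beta> y))
     + ka * (\<Sum>x\<in>X. \<Sum>y\<in>X. \<Sum>s=0..W x y. real s)"

definition multinom :: "'a set \<Rightarrow> ('a \<Rightarrow> nat) \<Rightarrow> 'a mat \<Rightarrow> real" where
  "multinom X \<alpha> W =
     (\<Prod>x\<in>X. fact (\<alpha> x)) / (\<Prod>x\<in>X. \<Prod>y\<in>X. fact (W x y))"

definition mu ::
  "'a set \<Rightarrow> ('a \<times> 'a) set \<Rightarrow> ('a \<Rightarrow> nat) \<Rightarrow> ('a \<Rightarrow> nat) \<Rightarrow> ('a \<Rightarrow> real) \<Rightarrow> real \<Rightarrow> real
    \<Rightarrow> real \<Rightarrow> 'a mat \<Rightarrow> real" where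
  "mu X E \<alpha> \<beta> lam kc ka \<gamma> W =
     multinom X \<alpha> W * exp (\<gamma> * Psi X \<beta> lam kc ka W) /
     (\<Sum>W'\<in>alloc_states X E \<alpha> \<beta>. multinom X \<alpha> W' * exp (\<gamma> * Psi X \<beta> lam kc ka W'))"

text \<open>Irreducibility (ergodicity, for a finite state space) of a CTMC with
rates q restricted to the state set S.\<close>
definition irreducible_on :: "'s set \<Rightarrow> ('s \<Rightarrow> 's \<Rightarrow> real) \<Rightarrow> bool" where
  "irreducible_on S q \<longleftrightarrow>
     (\<forall>a\<in>S. \<forall>b\<in>S. (a, b) \<in> {(u, v). u \<in> S \<and> v \<in> S \<and> u \<noteq> v \<and> q u v > 0}\<^sup>*)"

definition reversible_on :: "'s set \<Rightarrow> ('s \<Rightarrow> 's \<Rightarrow> real) \<Rightarrow> ('s \<Rightarrow> real) \<Rightarrow> bool" where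
  "reversible_on S q \<pi> \<longleftrightarrow> (\<forall>a\<in>S. \<forall>b\<in>S. \<pi> a * q a b = \<pi> b * q b a)"

definition invariant_prob_on :: "'s set \<Rightarrow> ('s \<Rightarrow> 's \<Rightarrow> real) \<Rightarrow> ('s \<Rightarrow> real) \<Rightarrow> bool" where
  "invariant_prob_on S q \<pi> \<longleftrightarrow>
     (\<forall>a\<in>S. \<pi> a \<ge> 0) \<and> (\<Sum>a\<in>S. \<pi> a) = 1 \<and>
     (\<forall>b\<in>S. (\<Sum>a\<in>S - {b}. \<pi> a * q a b) = \<pi> b * (\<Sum>c\<in>S - {b}. q b c))"

end

theory Submission
  imports Defs
begin

text \<open>On allocation states every activation is a distribution move: one unit of row x leaves a
  column a and enters a column z with free capacity. The Gibbs weight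
  F(W) = binom(\<alpha>, W) e^{\<gamma> \<Psi>(W)} satisfies F(V + e_{xy}) (V + e_{xy})_{xy} = F(V) e^{\<gamma> f_{xy}(V + e_{xy})},
  and a move a \<rightarrow> z and its reverse z \<rightarrow> a pass through the same intermediate state
  V = W - e_{xa}, so their probability fluxes agree: \<mu>_\<gamma> satisfies detailed balance.

  Strict Hall's condition guarantees a column with free capacity among those reachable from any
  nonempty set of rows by alternating paths, and a free slot can be shifted back along such a path
  by moves. Doing this in parallel in two allocation states lets one of them move towards the
  other, decreasing their entrywise distance, so any two allocation states have a common
  successor; with detailed balance this is irreducibility. Applied to a partial state, the same
  shifting produces a state with more allocated resource, so allocation states exist. Uniqueness of
  the invariant law is the maximum principle for \<pi>/\<mu>_\<gamma>.\<close>

definition move :: "'a mat \<Rightarrow> 'a \<Rightarrow> 'a \<Rightarrow> 'a \<Rightarrow> 'a mat" where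
  "move W x a z = madd (msub W (eunit x a)) (eunit x z)"

lemma madd_eunit_apply:
  "madd W (eunit x y) u v = W u v + (if u = x \<and> v = y then 1 else 0)"
  by (simp add: madd_def eunit_def)

lemma move_apply:
  "W x a > 0 \<Longrightarrow> int (move W x a z u v)
     = int (W u v) - (if u = x \<and> v = a then 1 else 0) + (if u = x \<and> v = z then 1 else 0)"
  by (auto simp: move_def madd_def msub_def eunit_def)

lemma rowsum_madd_eunit:
  "finite X \<Longrightarrow> y \<in> X \<Longrightarrow> rowsum X (madd W (eunit x y)) u = rowsum X W u + (if u = x then 1 else 0)"
  by (auto simp: rowsum_def madd_eunit_apply sum.distrib)

lemma colsum_madd_eunit:
  "finite X \<Longrightarrow> x \<in> X \<Longrightarrow> colsum X (madd W (eunit x y)) v = colsum X W v + (if v = y then 1 else 0)"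
  by (auto simp: colsum_def madd_eunit_apply sum.distrib)

lemma rowsum_move:
  assumes "finite X" "a \<in> X" "z \<in> X" "W x a > 0"
  shows "rowsum X (move W x a z) u = rowsum X W u"
proof -
  have "int (rowsum X (move W x a z) u) = int (rowsum X W u)"
    using assms by (cases "u = x") (simp_all add: rowsum_def of_nat_sum move_apply sum.distrib sum_subtractf)
  then show ?thesis by simp
qed

lemma colsum_move:
  "finite X \<Longrightarrow> x \<in> X \<Longrightarrow> W x a > 0 \<Longrightarrow> int (colsum X (move W x a z) v)
     = int (colsum X W v) - (if v = a then 1 else 0) + (if v = z then 1 else 0)"
  by (simp add: colsum_def of_nat_sum move_apply sum.distrib sum_subtractf)

lemma sum_single_change:
  assumes "finite A" "a \<in> A" "g a = f a + c" "\<And>b. b \<in> A \<Longrightarrow> b \<noteq> a \<Longrightarrow> g b = f b"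
  shows "sum g A = sum f A + (c :: 'b :: comm_monoid_add)"
proof -
  have "sum g (A - {a}) = sum f (A - {a})" using assms(4) by (intro sum.cong) auto
  then show ?thesis using assms(3) by (simp add: sum.remove[OF assms(1,2)] ac_simps)
qed

lemma prod_single_change:
  assumes "finite A" "a \<in> A" "g a = f a * c" "\<And>b. b \<in> A \<Longrightarrow> b \<noteq> a \<Longrightarrow> g b = f b"
  shows "prod g A = prod f A * (c :: 'b :: comm_monoid_mult)"
proof -
  have "prod g (A - {a}) = prod f (A - {a})" using assms(4) by (intro prod.cong) auto
  then show ?thesis using assms(3) by (simp add: prod.remove[OF assms(1,2)] ac_simps)
qed

section \<open>Reversible chains on a finite state space\<close>

lemma reversible_on_imp_invariant_prob_on:
  assumes "reversible_on S q \<pi>" "\<forall>a\<in>S. \<pi> a \<ge> 0" "(\<Sum>a\<in>S. \<pi> a) = 1"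
  shows "invariant_prob_on S q \<pi>"
proof -
  have "(\<Sum>a\<in>S - {b}. \<pi> a * q a b) = \<pi> b * (\<Sum>c\<in>S - {b}. q b c)" if "b \<in> S" for b
    using assms(1) that by (simp add: reversible_on_def sum_distrib_left)
  then show ?thesis using assms(2,3) by (simp add: invariant_prob_on_def)
qed

lemma rate_pos_sym_if_reversible:
  assumes "reversible_on S q \<pi>" "\<And>a. a \<in> S \<Longrightarrow> \<pi> a > 0"
    and "a \<in> S" "b \<in> S" "q a b > 0"
  shows "q b a > 0"
proof -
  have "\<pi> b * q b a > 0" using assms by (simp add: reversible_on_def)
  then show ?thesis using assms(2)[OF assms(4)] by (simp add: zero_less_mult_iff)
qed

lemma irreducible_on_if_joinable:
  assumes step: "\<And>a b. a \<in> S \<Longrightarrow> (a, b) \<in> R \<Longrightarrow> b \<in> S \<and> (a \<noteq> b \<longrightarrow> q a b > 0)"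
    and sym: "\<And>a b. a \<in> S \<Longrightarrow> b \<in> S \<Longrightarrow> q a b > 0 \<Longrightarrow> q b a > 0"
    and join: "\<And>a b. a \<in> S \<Longrightarrow> b \<in> S \<Longrightarrow> \<exists>c. (a, c) \<in> R\<^sup>* \<and> (b, c) \<in> R\<^sup>*"
  shows "irreducible_on S q"
proof -
  define P where "P = {(u, v). u \<in> S \<and> v \<in> S \<and> u \<noteq> v \<and> q u v > 0}"
  have forward: "c \<in> S \<and> (a, c) \<in> P\<^sup>*" if "a \<in> S" "(a, c) \<in> R\<^sup>*" for a c
    using that(2,1)
  proof (induction rule: rtrancl_induct)
    case (step b c)
    then have "b \<in> S" and ab: "(a, b) \<in> P\<^sup>*" by auto
    with assms(1) step.hyps(2) have c: "c \<in> S" and "b \<noteq> c \<longrightarrow> q b c > 0" by auto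
    then have "b \<noteq> c \<longrightarrow> (b, c) \<in> P" using \<open>b \<in> S\<close> by (simp add: P_def)
    then show ?case using c ab by (cases "b = c") (auto intro: rtrancl_into_rtrancl)
  qed simp
  have "P\<inverse> \<subseteq> P" using sym by (auto simp: P_def)
  have backward: "(c, b) \<in> P\<^sup>*" if "(b, c) \<in> P\<^sup>*" for b c
    using rtrancl_mono[OF \<open>P\<inverse> \<subseteq> P\<close>] rtrancl_converseI[OF that] by (rule subsetD)
  show ?thesis unfolding irreducible_on_def P_def[symmetric]
  proof (intro ballI)
    fix a b assume "a \<in> S" "b \<in> S"
    with join obtain c where "(a, c) \<in> R\<^sup>*" "(b, c) \<in> R\<^sup>*" by blast
    then have "(a, c) \<in> P\<^sup>*" "(c, b) \<in> P\<^sup>*"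
      using forward backward \<open>a \<in> S\<close> \<open>b \<in> S\<close> by auto
    then show "(a, b) \<in> P\<^sup>*" by (rule rtrancl_trans)
  qed
qed

text \<open>Balance at a maximiser b of \<pi>/m forces every state reachable from b in one jump to be a
  maximiser too: the balance equation becomes a vanishing sum of non-negative terms.\<close>
lemma invariant_ratio_max_propagates:
  assumes fin: "finite S" and rev: "reversible_on S q m"
    and m_pos: "\<And>c. c \<in> S \<Longrightarrow> m c > 0" and q_nonneg: "\<And>c. c \<in> S \<Longrightarrow> q b c \<ge> 0"
    and bal: "(\<Sum>c\<in>S - {b}. \<pi> c * q c b) = \<pi> b * (\<Sum>c\<in>S - {b}. q b c)"
    and b: "b \<in> S" and max: "\<And>c. c \<in> S \<Longrightarrow> \<pi> c / m c \<le> \<pi> b / m b"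
    and a: "a \<in> S" "a \<noteq> b" "q b a > 0"
  shows "\<pi> a / m a = \<pi> b / m b"
proof -
  define h where "h c = \<pi> c / m c" for c
  have \<pi>_eq: "\<pi> c = h c * m c" if "c \<in> S" for c using m_pos[OF that] by (simp add: h_def)
  have rev_b: "m c * q c b = m b * q b c" if "c \<in> S" for c
    using rev b that by (simp add: reversible_on_def)
  have "m b * (\<Sum>c\<in>S - {b}. h c * q b c) = (\<Sum>c\<in>S - {b}. \<pi> c * q c b)"
    unfolding sum_distrib_left by (intro sum.cong refl) (simp add: \<pi>_eq rev_b)
  also have "\<dots> = m b * (\<Sum>c\<in>S - {b}. h b * q b c)"
    unfolding bal \<pi>_eq[OF b] by (simp add: sum_distrib_left ac_simps)
  finally have "(\<Sum>c\<in>S - {b}. (h b - h c) * q b c) = 0"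
    using m_pos[OF b] by (simp add: left_diff_distrib sum_subtractf)
  moreover have "\<forall>c\<in>S - {b}. 0 \<le> (h b - h c) * q b c"
    using max q_nonneg by (simp add: h_def)
  ultimately have "(h b - h a) * q b a = 0"
    using fin a sum_nonneg_eq_0_iff[of "S - {b}" "\<lambda>c. (h b - h c) * q b c"] by auto
  then show ?thesis using a(3) by (simp add: h_def)
qed

lemma invariant_prob_on_unique:
  assumes fin: "finite S" and irr: "irreducible_on S q" and rev: "reversible_on S q m"
    and m_pos: "\<And>a. a \<in> S \<Longrightarrow> m a > 0" and m_sum: "(\<Sum>a\<in>S. m a) = 1"
    and q_nonneg: "\<And>a b. a \<in> S \<Longrightarrow> b \<in> S \<Longrightarrow> q a b \<ge> 0"
    and inv: "invariant_prob_on S q \<pi>"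
  shows "\<forall>a\<in>S. \<pi> a = m a"
proof -
  define h where "h c = \<pi> c / m c" for c
  have "S \<noteq> {}" using m_sum by auto
  then have "Max (h ` S) \<in> h ` S" using fin by simp
  then obtain b where b: "b \<in> S" and "h b = Max (h ` S)" by (metis imageE)
  then have b_max: "h c \<le> h b" if "c \<in> S" for c using fin that by simp
  have const: "h a = h b" if "a \<in> S" for a
  proof -
    have "(b, a) \<in> {(u, v). u \<in> S \<and> v \<in> S \<and> u \<noteq> v \<and> q u v > 0}\<^sup>*"
      using irr b that by (simp add: irreducible_on_def)
    then show ?thesis
    proof (induction rule: rtrancl_induct)
      case (step c a)
      then have c: "c \<in> S" and a: "a \<in> S" "a \<noteq> c" "q c a > 0" by auto
      have "\<pi> a / m a = \<pi> c / m c"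
      proof (rule invariant_ratio_max_propagates[OF fin rev m_pos q_nonneg _ c _ a])
        show "(\<Sum>d\<in>S - {c}. \<pi> d * q d c) = \<pi> c * (\<Sum>d\<in>S - {c}. q c d)"
          using inv c by (simp add: invariant_prob_on_def)
        show "\<pi> d / m d \<le> \<pi> c / m c" if "d \<in> S" for d
          using b_max[OF that] step.IH by (simp add: h_def)
      qed (use c in auto)
      then show ?case using step.IH by (simp add: h_def)
    qed simp
  qed
  have \<pi>_eq: "\<pi> a = h b * m a" if "a \<in> S" for a
    using const[OF that] m_pos[OF that] unfolding h_def by (simp add: field_simps)
  have "1 = h b * (\<Sum>a\<in>S. m a)"
    using inv by (simp add: invariant_prob_on_def \<pi>_eq sum_distrib_left)
  then show ?thesis using m_sum \<pi>_eq by simp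
qed

section \<open>The Gibbs weight\<close>

definition gibbs_weight ::
  "'a set \<Rightarrow> ('a \<Rightarrow> nat) \<Rightarrow> ('a \<Rightarrow> nat) \<Rightarrow> ('a \<Rightarrow> real) \<Rightarrow> real \<Rightarrow> real \<Rightarrow> real \<Rightarrow> 'a mat \<Rightarrow> real"
  where "gibbs_weight X \<alpha> \<beta> lam kc ka \<gamma> W = multinom X \<alpha> W * exp (\<gamma> * Psi X \<beta> lam kc ka W)"

lemma gibbs_weight_pos: "gibbs_weight X \<alpha> \<beta> lam kc ka \<gamma> W > 0"
  unfolding gibbs_weight_def multinom_def by (intro mult_pos_pos divide_pos_pos prod_pos) auto

lemma mu_eq_gibbs_weight:
  "mu X E \<alpha> \<beta> lam kc ka \<gamma> W = gibbs_weight X \<alpha> \<beta> lam kc ka \<gamma> W /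
     (\<Sum>W'\<in>alloc_states X E \<alpha> \<beta>. gibbs_weight X \<alpha> \<beta> lam kc ka \<gamma> W')"
  by (simp add: mu_def gibbs_weight_def)

lemma multinom_madd_eunit:
  assumes fin: "finite X" and x: "x \<in> X" and y: "y \<in> X"
  shows "multinom X \<alpha> (madd V (eunit x y)) * real (Suc (V x y)) = multinom X \<alpha> V"
proof -
  let ?denom = "\<lambda>W. \<Prod>u\<in>X. \<Prod>v\<in>X. (fact (W u v) :: real)"
  have row: "(\<Prod>v\<in>X. fact (madd V (eunit x y) x v) :: real)
      = (\<Prod>v\<in>X. fact (V x v)) * real (Suc (V x y))"
    by (rule prod_single_change[OF fin y]) (auto simp: madd_eunit_apply fact_Suc)
  have "?denom (madd V (eunit x y)) = ?denom V * real (Suc (V x y))"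
    by (rule prod_single_change[OF fin x]) (simp add: row, simp add: madd_eunit_apply)
  moreover have "?denom V > 0" by (intro prod_pos) auto
  ultimately show ?thesis by (simp add: multinom_def)
qed

lemma Psi_madd_eunit:
  assumes fin: "finite X" and x: "x \<in> X" and y: "y \<in> X"
  shows "Psi X \<beta> lam kc ka (madd V (eunit x y))
       = Psi X \<beta> lam kc ka V + fval X \<beta> lam kc ka x y (madd V (eunit x y))"
proof -
  note col = colsum_madd_eunit[OF fin x, of V y]
  have congestion: "(\<Sum>v\<in>X. \<Sum>s=0..colsum X (madd V (eunit x y)) v. lam v - kc * real s / real (\<beta> v))
      = (\<Sum>v\<in>X. \<Sum>s=0..colsum X V v. lam v - kc * real s / real (\<beta> v))
        + (lam y - kc * real (Suc (colsum X V y)) / real (\<beta> y))"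
    by (rule sum_single_change[OF fin y]) (auto simp: col)
  have row: "(\<Sum>v\<in>X. \<Sum>s=0..madd V (eunit x y) x v. real s)
      = (\<Sum>v\<in>X. \<Sum>s=0..V x v. real s) + real (Suc (V x y))"
    by (rule sum_single_change[OF fin y]) (auto simp: madd_eunit_apply)
  have attraction: "(\<Sum>u\<in>X. \<Sum>v\<in>X. \<Sum>s=0..madd V (eunit x y) u v. real s)
      = (\<Sum>u\<in>X. \<Sum>v\<in>X. \<Sum>s=0..V u v. real s) + real (Suc (V x y))"
    by (rule sum_single_change[OF fin x]) (simp add: row, simp add: madd_eunit_apply)
  show ?thesis
    unfolding Psi_def fval_def congestion attraction using col
    by (simp add: madd_eunit_apply algebra_simps)
qed

lemma gibbs_weight_madd_eunit:
  assumes "finite X" "x \<in> X" "y \<in> X"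
  shows "gibbs_weight X \<alpha> \<beta> lam kc ka \<gamma> (madd V (eunit x y)) * real (madd V (eunit x y) x y)
       = gibbs_weight X \<alpha> \<beta> lam kc ka \<gamma> V * exp (\<gamma> * fval X \<beta> lam kc ka x y (madd V (eunit x y)))"
  using multinom_madd_eunit[OF assms, of \<alpha> V]
  by (simp add: gibbs_weight_def Psi_madd_eunit[OF assms] madd_eunit_apply distrib_left exp_add ac_simps)

section \<open>Moves between allocation states\<close>

text \<open>shift_set E M S n: the columns from which a free slot can be passed back into S in at most
  n relocations, each of which moves a unit of some row u (with M u _ > 0) out of the previous
  column into the free one.\<close>
fun shift_set :: "('a \<times> 'a) set \<Rightarrow> 'a mat \<Rightarrow> 'a set \<Rightarrow> nat \<Rightarrow> 'a set" where
  "shift_set E M S 0 = S"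
| "shift_set E M S (Suc n) =
     shift_set E M S n \<union> {z. \<exists>u z'. z' \<in> shift_set E M S n \<and> M u z' > 0 \<and> (u, z) \<in> E}"

lemma shift_set_mono: "m \<le> n \<Longrightarrow> shift_set E M S m \<subseteq> shift_set E M S n"
  by (induction n rule: dec_induct) auto

lemma shift_set_subset_shift_set:
  assumes "\<And>u v. (u, v) \<noteq> (x, y) \<Longrightarrow> M u v > 0 \<Longrightarrow> M' u v > 0"
    and "\<And>m. m < n \<Longrightarrow> y \<notin> shift_set E M S m"
  shows "shift_set E M S n \<subseteq> shift_set E M' S n"
proof -
  have "k \<le> n \<Longrightarrow> shift_set E M S k \<subseteq> shift_set E M' S k" for k
  proof (induction k)
    case (Suc k)
    have IH: "shift_set E M S k \<subseteq> shift_set E M' S k" using Suc by simp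
    have pos: "M' u z' > 0" if "z' \<in> shift_set E M S k" "M u z' > 0" for u z'
      using assms that Suc.prems by (metis Suc_le_lessD prod.inject)
    show ?case
    proof
      fix z assume "z \<in> shift_set E M S (Suc k)"
      then show "z \<in> shift_set E M' S (Suc k)" using IH pos by simp blast
    qed
  qed simp
  then show ?thesis by simp
qed

locale allocation_graph =
  fixes X :: "'a set" and E :: "('a \<times> 'a) set" and \<alpha> \<beta> :: "'a \<Rightarrow> nat"
  assumes finite_X: "finite X" and edges_in_X: "E \<subseteq> X \<times> X"
begin

abbreviation "PS \<equiv> partial_states X E \<alpha> \<beta>"
abbreviation "AS \<equiv> alloc_states X E \<alpha> \<beta>"

lemma edge_in_X: "(x, y) \<in> E \<Longrightarrow> x \<in> X \<and> y \<in> X"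
  using edges_in_X by auto

lemma partial_state_pos_edge: "W \<in> PS \<Longrightarrow> W x y > 0 \<Longrightarrow> (x, y) \<in> E"
  by (cases "(x, y) \<in> E") (auto simp: partial_states_def)

lemma partial_state_rowsum_le: "W \<in> PS \<Longrightarrow> x \<in> X \<Longrightarrow> rowsum X W x \<le> \<alpha> x"
  by (auto simp: partial_states_def)

lemma partial_state_colsum_le: "W \<in> PS \<Longrightarrow> y \<in> X \<Longrightarrow> colsum X W y \<le> \<beta> y"
  by (auto simp: partial_states_def)

lemma alloc_state_partial: "W \<in> AS \<Longrightarrow> W \<in> PS"
  by (auto simp: alloc_states_def)

lemma alloc_state_rowsum: "W \<in> AS \<Longrightarrow> x \<in> X \<Longrightarrow> rowsum X W x = \<alpha> x"
  by (auto simp: alloc_states_def)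

lemma entry_le_rowsum: "y \<in> X \<Longrightarrow> W x y \<le> rowsum X W x"
  unfolding rowsum_def by (rule member_le_sum) (use finite_X in auto)

lemma entry_le_colsum: "x \<in> X \<Longrightarrow> W x y \<le> colsum X W y"
  unfolding colsum_def by (rule member_le_sum) (use finite_X in auto)

lemma nbhd_set_subset: "nbhd_set E A \<subseteq> X"
  using edges_in_X by (auto simp: nbhd_set_def nbhd_def)

lemma madd_eunit_partial_state:
  assumes W: "W \<in> PS" and e: "(x, z) \<in> E"
    and "rowsum X W x < \<alpha> x" "colsum X W z < \<beta> z"
  shows "madd W (eunit x z) \<in> PS"
  using assms edge_in_X[OF e] partial_state_rowsum_le[OF W] partial_state_colsum_le[OF W]
    rowsum_madd_eunit[OF finite_X] colsum_madd_eunit[OF finite_X]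
  by (auto simp: partial_states_def madd_eunit_apply)

lemma move_partial_state:
  assumes W: "W \<in> PS" and "x \<in> X" "a \<in> X" and pos: "W x a > 0"
    and e: "(x, z) \<in> E" and free: "colsum X W z < \<beta> z"
  shows "move W x a z \<in> PS"
proof -
  have "(x, a) \<in> E" using partial_state_pos_edge[OF W pos] .
  then have "move W x a z u v = 0" if "(u, v) \<notin> E" for u v
    using move_apply[of W x a z u v] pos W e that by (auto simp: partial_states_def split: if_splits)
  moreover have "colsum X (move W x a z) v \<le> \<beta> v" if "v \<in> X" for v
    using colsum_move[of X x W a z v] finite_X \<open>x \<in> X\<close> pos partial_state_colsum_le[OF W that] free
    by (auto split: if_splits)
  ultimately show ?thesis
    using assms edge_in_X[OF e] rowsum_move[OF finite_X] partial_state_rowsum_le[OF W]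
    by (auto simp: partial_states_def)
qed

lemma finite_alloc_states: "finite AS"
proof -
  define K where "K = sum \<alpha> X"
  define R where "R = {f :: 'a \<Rightarrow> nat. \<forall>y. (y \<in> X \<longrightarrow> f y \<in> {0..K}) \<and> (y \<notin> X \<longrightarrow> f y = 0)}"
  have "finite R" unfolding R_def by (rule finite_set_of_finite_funs[OF finite_X]) simp
  then have "finite {W. \<forall>x. (x \<in> X \<longrightarrow> W x \<in> R) \<and> (x \<notin> X \<longrightarrow> W x = (\<lambda>_. 0))}"
    by (rule finite_set_of_finite_funs[OF finite_X])
  moreover have "AS \<subseteq> {W. \<forall>x. (x \<in> X \<longrightarrow> W x \<in> R) \<and> (x \<notin> X \<longrightarrow> W x = (\<lambda>_. 0))}"
  proof safe
    fix W assume W: "W \<in> AS"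
    have out: "W u v = 0" if "u \<notin> X \<or> v \<notin> X" for u v
      using partial_state_pos_edge[OF alloc_state_partial[OF W], of u v] edge_in_X that by auto
    have "W u v \<le> K" if "u \<in> X" "v \<in> X" for u v
      using entry_le_rowsum[OF that(2), of W u] alloc_state_rowsum[OF W that(1)]
        member_le_sum[OF that(1), of \<alpha>] finite_X by (simp add: K_def)
    with out show "W x \<in> R" if "x \<in> X" for x using that by (auto simp: R_def)
    show "W x = (\<lambda>_. 0)" if "x \<notin> X" for x using out that by auto
  qed
  ultimately show ?thesis by (rule finite_subset[rotated])
qed

definition move_rel :: "'a mat rel" where
  "move_rel = {(W, move W x a z) | W x a z. W \<in> PS \<and> x \<in> X \<and> a \<in> X \<and> W x a > 0 \<and>
                 (x, z) \<in> E \<and> colsum X W z < \<beta> z}"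

lemma move_relI:
  "W \<in> PS \<Longrightarrow> x \<in> X \<Longrightarrow> a \<in> X \<Longrightarrow> W x a > 0 \<Longrightarrow> (x, z) \<in> E \<Longrightarrow> colsum X W z < \<beta> z
    \<Longrightarrow> (W, move W x a z) \<in> move_rel"
  unfolding move_rel_def by blast

lemma move_rel_preserves_rowsums:
  assumes "(W, V) \<in> move_rel"
  shows "V \<in> PS \<and> (\<forall>u. rowsum X V u = rowsum X W u)"
  using assms move_partial_state rowsum_move[OF finite_X] edge_in_X
  unfolding move_rel_def by blast

lemma move_rel_rtrancl_preserves_rowsums:
  assumes "(W, V) \<in> move_rel\<^sup>*" "W \<in> PS"
  shows "V \<in> PS \<and> (\<forall>u. rowsum X V u = rowsum X W u)"
  using assms by (induction rule: rtrancl_induct) (auto dest: move_rel_preserves_rowsums)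

lemma move_rel_rtrancl_alloc_state: "(W, V) \<in> move_rel\<^sup>* \<Longrightarrow> W \<in> AS \<Longrightarrow> V \<in> AS"
  using move_rel_rtrancl_preserves_rowsums[of W V]
  by (auto simp: alloc_states_def)

text \<open>The same relocations are applied to both states, so their difference is unchanged; taking
  W' = W gives the single-state version.\<close>
lemma shift_free_slot:
  assumes "W \<in> PS" "W' \<in> PS" "z \<in> shift_set E (\<lambda>u v. min (W u v) (W' u v)) S n"
    and "colsum X W z < \<beta> z" "colsum X W' z < \<beta> z"
  shows "\<exists>V V' z0. (W, V) \<in> move_rel\<^sup>* \<and> (W', V') \<in> move_rel\<^sup>* \<and> z0 \<in> S \<and>
           colsum X V z0 < \<beta> z0 \<and> colsum X V' z0 < \<beta> z0 \<and>
           (\<forall>u v. int (V u v) - int (V' u v) = int (W u v) - int (W' u v))"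
  using assms
proof (induction n arbitrary: W W' z)
  case 0
  then show ?case by auto
next
  case (Suc n)
  let ?M = "\<lambda>W W' u v. min (W u v) (W' u v)"
  show ?case
  proof (cases "z \<in> shift_set E (?M W W') S n")
    case True
    with Suc show ?thesis by blast
  next
    case False
    with Suc.prems(3) obtain u a where a: "a \<in> shift_set E (?M W W') S n"
      and pos: "W u a > 0" "W' u a > 0" and e: "(u, z) \<in> E" by auto
    have u: "u \<in> X" and aX: "a \<in> X"
      using partial_state_pos_edge[OF Suc.prems(1) pos(1)] edge_in_X by auto
    have "a \<noteq> z" using False a by blast
    define V1 V1' where "V1 = move W u a z" and "V1' = move W' u a z"
    have steps: "(W, V1) \<in> move_rel" "(W', V1') \<in> move_rel"
      unfolding V1_def V1'_def using Suc.prems u aX pos e by (auto intro: move_relI)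
    have V1: "V1 \<in> PS" "V1' \<in> PS" using steps move_rel_preserves_rowsums by blast+
    have diff: "int (V1 v w) - int (V1' v w) = int (W v w) - int (W' v w)" for v w
      using move_apply[of W u a z v w] move_apply[of W' u a z v w] pos
      unfolding V1_def V1'_def by simp
    have free: "colsum X (move Y u a z) a < \<beta> a" if "Y \<in> PS" "Y u a > 0" for Y
      using colsum_move[of X u Y a z a] entry_le_colsum[OF u, of Y a]
        partial_state_colsum_le[OF that(1) aX] finite_X u that(2) \<open>a \<noteq> z\<close> by simp
    have "shift_set E (?M W W') S n \<subseteq> shift_set E (?M V1 V1') S n"
    proof (rule shift_set_subset_shift_set[where x = u and y = a])
      fix v w assume "(v, w) \<noteq> (u, a)" "?M W W' v w > 0"
      then show "?M V1 V1' v w > 0"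
        using move_apply[of W u a z v w] move_apply[of W' u a z v w] pos
        unfolding V1_def V1'_def by (auto split: if_splits)
    next
      fix m assume "m < n"
      then have "shift_set E (?M W W') S (Suc m) \<subseteq> shift_set E (?M W W') S n"
        by (intro shift_set_mono) simp
      then show "a \<notin> shift_set E (?M W W') S m" using False pos e by auto
    qed
    with a have "a \<in> shift_set E (?M V1 V1') S n" by blast
    from Suc.IH[OF V1 this] free[OF Suc.prems(1) pos(1)] free[OF Suc.prems(2) pos(2)]
    obtain V V' z0 where "(V1, V) \<in> move_rel\<^sup>*" "(V1', V') \<in> move_rel\<^sup>*" "z0 \<in> S"
      "colsum X V z0 < \<beta> z0" "colsum X V' z0 < \<beta> z0"
      "\<forall>v w. int (V v w) - int (V' v w) = int (V1 v w) - int (V1' v w)"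
      unfolding V1_def V1'_def by blast
    moreover have "(W, V) \<in> move_rel\<^sup>*" "(W', V') \<in> move_rel\<^sup>*"
      using steps calculation(1,2) by (auto intro: converse_rtrancl_into_rtrancl)
    ultimately show ?thesis using diff by metis
  qed
qed

definition entry_dist :: "'a mat \<Rightarrow> 'a mat \<Rightarrow> nat" where
  "entry_dist W W' = (\<Sum>u\<in>X. \<Sum>v\<in>X. nat \<bar>int (W u v) - int (W' u v)\<bar>)"

lemma entry_dist_less:
  assumes le: "\<And>u v. u \<in> X \<Longrightarrow> v \<in> X \<Longrightarrow>
      \<bar>int (V u v) - int (V' u v)\<bar> \<le> \<bar>int (W u v) - int (W' u v)\<bar>"
    and "x \<in> X" "a \<in> X" and less: "\<bar>int (V x a) - int (V' x a)\<bar> < \<bar>int (W x a) - int (W' x a)\<bar>"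
  shows "entry_dist V V' < entry_dist W W'"
proof -
  let ?d = "\<lambda>W W' u. \<Sum>v\<in>X. nat \<bar>int (W u v) - int (W' u v)\<bar>"
  have "?d V V' u \<le> ?d W W' u" if "u \<in> X" for u
    using le that by (auto intro!: sum_mono nat_mono)
  moreover have "?d V V' x < ?d W W' x"
    by (rule sum_strict_mono_ex1[OF finite_X])
      (use le less \<open>x \<in> X\<close> \<open>a \<in> X\<close> in \<open>auto intro!: nat_mono bexI[of _ a]\<close>)
  ultimately show ?thesis
    unfolding entry_dist_def using \<open>x \<in> X\<close> by (intro sum_strict_mono_ex1[OF finite_X]) auto
qed

lemma alloc_state_row_surplus:
  assumes W: "W \<in> AS" and W': "W' \<in> AS" and x: "x \<in> X" and "v \<in> X" "W x v < W' x v"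
  shows "\<exists>a\<in>X. W' x a < W x a"
proof (rule ccontr)
  assume "\<not> ?thesis"
  then have "rowsum X W x < rowsum X W' x"
    unfolding rowsum_def using assms(4,5) by (intro sum_strict_mono_ex1[OF finite_X]) auto
  then show False using alloc_state_rowsum[OF W x] alloc_state_rowsum[OF W' x] by simp
qed

lemma move_toward_decreases_dist:
  assumes W: "W \<in> AS" and W': "W' \<in> AS" and x: "x \<in> X"
    and free: "colsum X W z < \<beta> z" and lt: "W x z < W' x z"
  shows "\<exists>V. (W, V) \<in> move_rel \<and> entry_dist V W' < entry_dist W W'"
proof -
  have e: "(x, z) \<in> E" using partial_state_pos_edge[OF alloc_state_partial[OF W']] lt by simp
  then obtain a where a: "a \<in> X" "W' x a < W x a"
    using alloc_state_row_surplus[OF W W' x _ lt] edge_in_X by blast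
  then have pos: "W x a > 0" by simp
  have "entry_dist (move W x a z) W' < entry_dist W W'"
    by (rule entry_dist_less[OF _ x a(1)]) (use move_apply[of W x a z] pos a lt in auto)
  moreover have "(W, move W x a z) \<in> move_rel"
    using alloc_state_partial[OF W] x a(1) pos e free by (rule move_relI)
  ultimately show ?thesis by blast
qed

lemma parallel_moves_decrease_dist:
  assumes W: "W \<in> AS" and W': "W' \<in> AS" and e: "(x, z) \<in> E"
    and free: "colsum X W z < \<beta> z" "colsum X W' z < \<beta> z"
    and v: "v \<in> X" "W x v \<noteq> W' x v"
  shows "\<exists>V V'. (W, V) \<in> move_rel \<and> (W', V') \<in> move_rel \<and> entry_dist V V' < entry_dist W W'"
proof -
  have x: "x \<in> X" using e edge_in_X by blast
  obtain a b where a: "a \<in> X" "W' x a < W x a" and b: "b \<in> X" "W x b < W' x b"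
    using alloc_state_row_surplus[OF W W' x v(1)] alloc_state_row_surplus[OF W' W x v(1)] v
    by (metis linorder_neqE_nat)
  then have pos: "W x a > 0" "W' x b > 0" and "a \<noteq> b" by auto
  have "entry_dist (move W x a z) (move W' x b z) < entry_dist W W'"
    by (rule entry_dist_less[OF _ x a(1)])
      (use move_apply[of W x a z] move_apply[of W' x b z] pos a b \<open>a \<noteq> b\<close> in auto)
  moreover have "(W, move W x a z) \<in> move_rel" "(W', move W' x b z) \<in> move_rel"
    using W W' x a(1) b(1) pos e free by (auto intro: move_relI alloc_state_partial)
  ultimately show ?thesis by blast
qed

end

section \<open>Strict Hall condition: existence and connectivity\<close>

locale strict_hall_graph = allocation_graph +
  assumes strict_hall: "\<And>A. A \<subseteq> X \<Longrightarrow> A \<noteq> {} \<Longrightarrow> (\<Sum>x\<in>A. \<alpha> x) < (\<Sum>y\<in>nbhd_set E A. \<beta> y)"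
begin

text \<open>If all units with resources in the columns G lie in A, those columns hold at most
  \<Sum>x\<in>A. \<alpha> x, which is strictly less than their capacity.\<close>
lemma exists_free_column:
  assumes G: "G \<subseteq> X" and A: "A \<subseteq> X" "A \<noteq> {}" and NA: "nbhd_set E A \<subseteq> G" and W: "W \<in> PS"
    and closed: "\<And>u z. u \<in> X \<Longrightarrow> z \<in> G \<Longrightarrow> W u z > 0 \<Longrightarrow> u \<in> A"
  shows "\<exists>z\<in>G. colsum X W z < \<beta> z"
proof (rule ccontr)
  assume "\<not> ?thesis"
  then have full: "\<beta> z \<le> colsum X W z" if "z \<in> G" for z using that by force
  have "finite G" using G finite_X finite_subset by blast
  have "(\<Sum>x\<in>A. \<alpha> x) < (\<Sum>y\<in>nbhd_set E A. \<beta> y)" using strict_hall A by blast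
  also have "\<dots> \<le> (\<Sum>y\<in>G. \<beta> y)" by (rule sum_mono2[OF \<open>finite G\<close> NA]) auto
  also have "\<dots> \<le> (\<Sum>z\<in>G. colsum X W z)" using full by (rule sum_mono)
  also have "\<dots> = (\<Sum>z\<in>G. \<Sum>u\<in>A. W u z)"
    unfolding colsum_def using closed by (intro sum.cong refl sum.mono_neutral_right finite_X A(1)) force
  also have "\<dots> = (\<Sum>u\<in>A. \<Sum>z\<in>G. W u z)" by (rule sum.swap)
  also have "\<dots> \<le> (\<Sum>u\<in>A. rowsum X W u)"
    unfolding rowsum_def by (intro sum_mono sum_mono2[OF finite_X G]) auto
  also have "\<dots> \<le> (\<Sum>x\<in>A. \<alpha> x)" using partial_state_rowsum_le[OF W] A by (intro sum_mono) auto
  finally show False by simp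
qed

lemma exists_free_column_in_shift_set:
  assumes W: "W \<in> PS" and U: "U \<subseteq> X" "U \<noteq> {}"
    and M: "\<And>u z. u \<in> X - U \<Longrightarrow> W u z > 0 \<Longrightarrow> M u z > 0"
  shows "\<exists>z n. z \<in> shift_set E M (nbhd_set E U) n \<and> colsum X W z < \<beta> z"
proof -
  define G where "G = (\<Union>n. shift_set E M (nbhd_set E U) n)"
  define A where "A = {u \<in> X. nbhd E u \<subseteq> G}"
  have "shift_set E M (nbhd_set E U) n \<subseteq> X" for n
    using nbhd_set_subset edge_in_X by (induction n) auto
  then have G: "G \<subseteq> X" by (auto simp: G_def)
  have "nbhd_set E U \<subseteq> G" unfolding G_def by (metis UN_upper UNIV_I shift_set.simps(1))
  then have "U \<subseteq> A" using U(1) by (auto simp: A_def nbhd_set_def)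
  moreover have "nbhd_set E A \<subseteq> G" by (auto simp: A_def nbhd_set_def)
  moreover have "u \<in> A" if u: "u \<in> X" and "z \<in> G" "W u z > 0" for u z
  proof (cases "u \<in> U")
    case False
    obtain n where "z \<in> shift_set E M (nbhd_set E U) n" using \<open>z \<in> G\<close> by (auto simp: G_def)
    with M[of u z] that False have "nbhd E u \<subseteq> shift_set E M (nbhd_set E U) (Suc n)"
      by (auto simp: nbhd_def)
    then have "nbhd E u \<subseteq> G" unfolding G_def by blast
    then show ?thesis using u by (simp add: A_def)
  qed (use \<open>U \<subseteq> A\<close> in blast)
  moreover have "A \<subseteq> X" by (auto simp: A_def)
  ultimately have "\<exists>z\<in>G. colsum X W z < \<beta> z"
    using U(2) by (intro exists_free_column[OF G, of A W] W) auto
  then show ?thesis by (auto simp: G_def)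
qed

lemma exists_larger_partial_state:
  assumes W: "W \<in> PS" and x: "x \<in> X" and short: "rowsum X W x < \<alpha> x"
  shows "\<exists>W2\<in>PS. (\<Sum>u\<in>X. rowsum X W u) < (\<Sum>u\<in>X. rowsum X W2 u)"
proof -
  obtain z n where "z \<in> shift_set E W (nbhd_set E {x}) n" "colsum X W z < \<beta> z"
    using exists_free_column_in_shift_set[OF W, of "{x}" W] x by auto
  then obtain V z0 where V: "(W, V) \<in> move_rel\<^sup>*" and z0: "z0 \<in> nbhd E x" "colsum X V z0 < \<beta> z0"
    using shift_free_slot[OF W W, of z "nbhd_set E {x}" n] by (auto simp: nbhd_set_def)
  have V_rows: "V \<in> PS" "\<And>u. rowsum X V u = rowsum X W u"
    using move_rel_rtrancl_preserves_rowsums[OF V W] by auto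
  have e: "(x, z0) \<in> E" using z0 by (simp add: nbhd_def)
  have "madd V (eunit x z0) \<in> PS"
    using V_rows short z0(2) by (intro madd_eunit_partial_state[OF _ e]) auto
  moreover have "(\<Sum>u\<in>X. rowsum X W u) < (\<Sum>u\<in>X. rowsum X (madd V (eunit x z0)) u)"
    using x edge_in_X[OF e] by (intro sum_strict_mono_ex1[OF finite_X])
      (auto simp: rowsum_madd_eunit[OF finite_X] V_rows)
  ultimately show ?thesis by blast
qed

lemma exists_alloc_state: "\<exists>W. W \<in> AS"
proof -
  have "\<exists>V. V \<in> AS" if "W \<in> PS" for W
    using that
  proof (induction "sum \<alpha> X - (\<Sum>u\<in>X. rowsum X W u)" arbitrary: W rule: less_induct)
    case less
    show ?case
    proof (cases "\<forall>x\<in>X. rowsum X W x = \<alpha> x")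
      case True
      then show ?thesis using less.prems by (auto simp: alloc_states_def)
    next
      case False
      then obtain x where "x \<in> X" "rowsum X W x < \<alpha> x"
        using partial_state_rowsum_le[OF less.prems] le_neq_implies_less by blast
      then obtain W2 where W2: "W2 \<in> PS" "(\<Sum>u\<in>X. rowsum X W u) < (\<Sum>u\<in>X. rowsum X W2 u)"
        using exists_larger_partial_state less.prems by blast
      moreover have "(\<Sum>u\<in>X. rowsum X W2 u) \<le> sum \<alpha> X"
        using partial_state_rowsum_le[OF W2(1)] by (intro sum_mono)
      ultimately show ?thesis using less.hyps by (metis diff_less_mono2 order_less_le_trans)
    qed
  qed
  moreover have "(\<lambda>_ _. 0) \<in> PS" by (simp add: partial_states_def rowsum_def colsum_def)
  ultimately show ?thesis by blast
qed

text \<open>Either a column is free in both states and the free slot is shifted (in parallel) to a row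
  where they differ, or the column is free in W only and W can move a unit towards W'.\<close>
lemma moves_decrease_dist:
  assumes W: "W \<in> AS" and W': "W' \<in> AS" and ne: "W \<noteq> W'"
  shows "\<exists>V V'. (W, V) \<in> move_rel\<^sup>* \<and> (W', V') \<in> move_rel\<^sup>* \<and> entry_dist V V' < entry_dist W W'"
proof -
  define U where "U = {x \<in> X. \<exists>v\<in>X. W x v \<noteq> W' x v}"
  obtain u v where uv: "W u v \<noteq> W' u v" using ne by (auto simp: fun_eq_iff)
  then have "u \<in> X \<and> v \<in> X"
    using partial_state_pos_edge[OF alloc_state_partial[OF W], of u v]
      partial_state_pos_edge[OF alloc_state_partial[OF W'], of u v] edge_in_X
    by (cases "W u v = 0") auto
  with uv have "U \<noteq> {}" by (auto simp: U_def)
  moreover have "min (W u z) (W' u z) > 0" if "u \<in> X - U" "W u z > 0" for u z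
    using that partial_state_pos_edge[OF alloc_state_partial[OF W] that(2)] edge_in_X
    by (auto simp: U_def)
  ultimately obtain z n where z: "z \<in> shift_set E (\<lambda>u v. min (W u v) (W' u v)) (nbhd_set E U) n"
    and free: "colsum X W z < \<beta> z"
    using exists_free_column_in_shift_set[OF alloc_state_partial[OF W], of U "\<lambda>u v. min (W u v) (W' u v)"]
    by (auto simp: U_def)
  show ?thesis
  proof (cases "colsum X W' z < \<beta> z")
    case True
    from shift_free_slot[OF alloc_state_partial[OF W] alloc_state_partial[OF W'] z free True]
    obtain V1 V1' z0 where V1: "(W, V1) \<in> move_rel\<^sup>*" "(W', V1') \<in> move_rel\<^sup>*"
      and z0: "z0 \<in> nbhd_set E U" "colsum X V1 z0 < \<beta> z0" "colsum X V1' z0 < \<beta> z0"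
      and diff: "\<forall>u v. int (V1 u v) - int (V1' u v) = int (W u v) - int (W' u v)" by blast
    obtain x where x: "x \<in> U" "(x, z0) \<in> E" using z0(1) by (auto simp: nbhd_set_def nbhd_def)
    then obtain v where v: "v \<in> X" "W x v \<noteq> W' x v" by (auto simp: U_def)
    then have "V1 x v \<noteq> V1' x v" using diff[rule_format, of x v] by linarith
    then obtain V V' where steps: "(V1, V) \<in> move_rel" "(V1', V') \<in> move_rel"
      and "entry_dist V V' < entry_dist V1 V1'"
      using parallel_moves_decrease_dist[OF _ _ x(2) z0(2,3) v(1)] W W' V1
        move_rel_rtrancl_alloc_state by blast
    moreover have "entry_dist V1 V1' = entry_dist W W'" using diff by (simp add: entry_dist_def)
    moreover have "(W, V) \<in> move_rel\<^sup>*" "(W', V') \<in> move_rel\<^sup>*"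
      using V1 steps by (auto intro: rtrancl_into_rtrancl)
    ultimately show ?thesis by auto
  next
    case False
    have "\<exists>x\<in>X. W x z < W' x z"
    proof (rule ccontr)
      assume "\<not> ?thesis"
      then have "colsum X W' z \<le> colsum X W z" unfolding colsum_def by (intro sum_mono) auto
      then show False using False free by simp
    qed
    then obtain x where "x \<in> X" "W x z < W' x z" by blast
    then show ?thesis
      using move_toward_decreases_dist[OF W W' _ free] by blast
  qed
qed

lemma alloc_states_joinable:
  "W \<in> AS \<Longrightarrow> W' \<in> AS \<Longrightarrow> \<exists>V. (W, V) \<in> move_rel\<^sup>* \<and> (W', V) \<in> move_rel\<^sup>*"
proof (induction "entry_dist W W'" arbitrary: W W' rule: less_induct)
  case less
  show ?case
  proof (cases "W = W'")
    case False
    then obtain V1 V1' where V1: "(W, V1) \<in> move_rel\<^sup>*" "(W', V1') \<in> move_rel\<^sup>*"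
      and "entry_dist V1 V1' < entry_dist W W'"
      using moves_decrease_dist less.prems by blast
    with less.hyps obtain V where "(V1, V) \<in> move_rel\<^sup>*" "(V1', V) \<in> move_rel\<^sup>*"
      using move_rel_rtrancl_alloc_state less.prems by blast
    with V1 show ?thesis by (meson rtrancl_trans)
  qed blast
qed

end

section \<open>Detailed balance\<close>

locale allocation_dynamics = allocation_graph +
  fixes lam :: "'a \<Rightarrow> real" and kc ka \<gamma> \<nu> :: real and Pall Pdis :: "'a mat \<Rightarrow> 'a \<Rightarrow> real"
  assumes nu_pos: "\<nu> > 0"
    and distribution_only: "\<And>W x. W \<in> AS \<Longrightarrow> x \<in> X \<Longrightarrow> Pall W x = 0 \<and> Pdis W x = 1"
begin

abbreviation "q \<equiv> rate X E \<alpha> \<beta> lam kc ka \<gamma> \<nu> Pall Pdis"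
abbreviation "p \<equiv> pchoice X E \<beta> lam kc ka \<gamma>"
abbreviation "F \<equiv> gibbs_weight X \<alpha> \<beta> lam kc ka \<gamma>"

text \<open>Rate at which unit x moves a resource from a to z turning W into W'. In the paper's rate the
  probability W x a / \<alpha> x of picking a cancels against the clock rate \<nu> \<alpha> x.\<close>
definition relocation_rate :: "'a mat \<Rightarrow> 'a mat \<Rightarrow> 'a \<Rightarrow> 'a \<Rightarrow> 'a \<Rightarrow> real" where
  "relocation_rate W W' x a z = \<nu> * real (W x a) *
     (if z \<in> avail X E \<beta> (msub W (eunit x a)) x \<and> move W x a z = W'
      then p (msub W (eunit x a)) x z else 0)"

lemma relocation_rate_nonneg: "relocation_rate W W' x a z \<ge> 0"
  using nu_pos by (simp add: relocation_rate_def pchoice_def sum_nonneg)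

lemma rate_alloc_state:
  assumes W: "W \<in> AS"
  shows "q W W' = (\<Sum>x\<in>X. \<Sum>a\<in>X. \<Sum>z\<in>X. relocation_rate W W' x a z)"
  unfolding rate_def
proof (intro sum.cong refl)
  fix x assume x: "x \<in> X"
  \<comment> \<open>if \<alpha> x = 0 the row of W vanishes, so the division by zero is harmless\<close>
  have cancel: "\<nu> * real (\<alpha> x) * (real (W x a) / real (rowsum X W x)) = \<nu> * real (W x a)"
    if "a \<in> X" for a
    using entry_le_rowsum[OF that, of W x] alloc_state_rowsum[OF W x] by auto
  have avail: "(\<Sum>z\<in>avail X E \<beta> V x. if move W x a z = W' then p V x z else 0)
      = (\<Sum>z\<in>X. if z \<in> avail X E \<beta> V x \<and> move W x a z = W' then p V x z else 0)" for V a
  proof -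
    have "avail X E \<beta> V x \<subseteq> X" using edge_in_X by (auto simp: avail_def nbhd_def)
    then have restrict: "sum g (avail X E \<beta> V x)
        = (\<Sum>z\<in>X. if z \<in> avail X E \<beta> V x then g z else 0)" for g
      using sum.inter_restrict[OF finite_X, of g "avail X E \<beta> V x"] by (simp add: Int_absorb1)
    show ?thesis unfolding restrict by (simp add: if_if_eq_conj)
  qed
  let ?T = "\<lambda>a. \<Sum>z\<in>X. if z \<in> avail X E \<beta> (msub W (eunit x a)) x \<and> move W x a z = W'
                    then p (msub W (eunit x a)) x z else 0"
  have "\<nu> * real (\<alpha> x) * (Pall W x *
          (\<Sum>ys\<in>avail X E \<beta> W x. if madd W (eunit x ys) = W' then p W x ys else 0) +
        Pdis W x * (\<Sum>yb\<in>X. real (W x yb) / real (rowsum X W x) *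
          (\<Sum>ys\<in>avail X E \<beta> (msub W (eunit x yb)) x.
             if madd (msub W (eunit x yb)) (eunit x ys) = W' then p (msub W (eunit x yb)) x ys else 0)))
      = (\<Sum>a\<in>X. \<nu> * real (\<alpha> x) * (real (W x a) / real (rowsum X W x)) * ?T a)"
    (is "?summand = _")
    using distribution_only[OF W x]
    by (simp add: avail[unfolded move_def] move_def sum_distrib_left mult.assoc)
  also have "\<dots> = (\<Sum>a\<in>X. \<Sum>z\<in>X. relocation_rate W W' x a z)"
    using cancel by (simp add: relocation_rate_def sum_distrib_left)
  finally show "?summand = (\<Sum>a\<in>X. \<Sum>z\<in>X. relocation_rate W W' x a z)" .
qed

lemma move_inverse:
  assumes W: "W \<in> AS" and x: "x \<in> X" and a: "a \<in> X" and pos: "W x a > 0"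
  shows "msub (move W x a z) (eunit x z) = msub W (eunit x a)"
    and "move (move W x a z) x z a = W"
    and "a \<in> avail X E \<beta> (msub W (eunit x a)) x"
proof -
  show "msub (move W x a z) (eunit x z) = msub W (eunit x a)"
    by (auto simp: fun_eq_iff move_def msub_def madd_def eunit_def)
  then show "move (move W x a z) x z a = W"
    using pos by (auto simp: fun_eq_iff move_def msub_def madd_def eunit_def)
  have "colsum X W a = colsum X (msub W (eunit x a)) a + 1"
    using colsum_madd_eunit[OF finite_X x, of "msub W (eunit x a)" a a] pos
    by (simp add: msub_def madd_def eunit_def fun_eq_iff cong: if_cong)
  then show "a \<in> avail X E \<beta> (msub W (eunit x a)) x"
    using partial_state_colsum_le[OF alloc_state_partial[OF W] a]
      partial_state_pos_edge[OF alloc_state_partial[OF W] pos]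
    by (simp add: avail_def nbhd_def)
qed

lemma relocation_rate_eq:
  "relocation_rate W W' x a z =
     (if W x a > 0 \<and> z \<in> avail X E \<beta> (msub W (eunit x a)) x \<and> move W x a z = W'
      then \<nu> * real (W x a) * p (msub W (eunit x a)) x z else 0)"
  by (simp add: relocation_rate_def)

lemma relocation_reversal:
  assumes W: "W \<in> AS" and x: "x \<in> X" and a: "a \<in> X"
    and pos: "W x a > 0" and avail: "z \<in> avail X E \<beta> (msub W (eunit x a)) x"
    and move: "move W x a z = W'"
  shows "W' x z > 0" and "a \<in> avail X E \<beta> (msub W' (eunit x z)) x" and "move W' x z a = W"
    and "msub W' (eunit x z) = msub W (eunit x a)"
proof -
  have "int (W' x z) = int (W x z) - (if z = a then 1 else 0) + 1"
    using move_apply[of W x a z x z] pos move by simp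
  then show "W' x z > 0" using pos by (cases "z = a") auto
  show "msub W' (eunit x z) = msub W (eunit x a)" "move W' x z a = W"
    using move_inverse(1,2)[OF W x a pos, of z] move by simp_all
  then show "a \<in> avail X E \<beta> (msub W' (eunit x z)) x"
    using move_inverse(3)[OF W x a pos] by simp
qed

text \<open>Both sides equal \<nu> F(V) e^{\<gamma> f_{xa}} e^{\<gamma> f_{xz}} / Z for the intermediate state
  V = W - e_{xa} = W' - e_{xz}, by the recursion for F.\<close>
lemma gibbs_weight_relocation_rate_swap:
  assumes W: "W \<in> AS" and W': "W' \<in> AS" and x: "x \<in> X" and a: "a \<in> X" and z: "z \<in> X"
  shows "F W * relocation_rate W W' x a z = F W' * relocation_rate W' W x z a"
proof (cases "W x a > 0 \<and> z \<in> avail X E \<beta> (msub W (eunit x a)) x \<and> move W x a z = W'")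
  case False
  moreover have "\<not> (W' x z > 0 \<and> a \<in> avail X E \<beta> (msub W' (eunit x z)) x \<and> move W' x z a = W)"
  proof
    assume "W' x z > 0 \<and> a \<in> avail X E \<beta> (msub W' (eunit x z)) x \<and> move W' x z a = W"
    then obtain pos: "W' x z > 0" and av: "a \<in> avail X E \<beta> (msub W' (eunit x z)) x"
      and mv: "move W' x z a = W" by (elim conjE)
    from relocation_reversal(1-3)[OF W' x z pos av mv] False show False by simp
  qed
  ultimately show ?thesis unfolding relocation_rate_eq by (simp only: if_False)
next
  case True
  then have pos: "W x a > 0" and av: "z \<in> avail X E \<beta> (msub W (eunit x a)) x"
    and mv: "move W x a z = W'" by auto
  define V where "V = msub W (eunit x a)"
  note rev = relocation_reversal(1-3)[OF W x a pos av mv]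
  have V': "msub W' (eunit x z) = V"
    unfolding V_def by (rule relocation_reversal(4)[OF W x a pos av mv])
  have WV: "W = madd V (eunit x a)" using rev(3) unfolding move_def V' by (rule sym)
  have W'V: "W' = madd V (eunit x z)" using mv unfolding move_def V_def[symmetric] by (rule sym)
  define Z where "Z = (\<Sum>y\<in>avail X E \<beta> V x. exp (\<gamma> * fval X \<beta> lam kc ka x y (madd V (eunit x y))))"
  define ea ez where "ea = exp (\<gamma> * fval X \<beta> lam kc ka x a W)"
    and "ez = exp (\<gamma> * fval X \<beta> lam kc ka x z W')"
  have Fa: "F W * real (W x a) = F V * ea"
    using gibbs_weight_madd_eunit[OF finite_X x a, of \<alpha> \<beta> lam kc ka \<gamma> V]
    unfolding WV[symmetric] ea_def .
  have Fz: "F W' * real (W' x z) = F V * ez"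
    using gibbs_weight_madd_eunit[OF finite_X x z, of \<alpha> \<beta> lam kc ka \<gamma> V]
    unfolding W'V[symmetric] ez_def .
  have pz: "p V x z = ez / Z" unfolding pchoice_def Z_def ez_def W'V ..
  have pa: "p V x a = ea / Z" unfolding pchoice_def Z_def ea_def WV ..
  have "F W * relocation_rate W W' x a z = \<nu> * (F W * real (W x a)) * p V x z"
    using pos av mv by (simp add: relocation_rate_eq V_def)
  also have "\<dots> = \<nu> * (F V * ez) * (ea / Z)" unfolding Fa pz by (simp add: ac_simps)
  also have "\<dots> = \<nu> * (F W' * real (W' x z)) * p V x a" unfolding Fz pa ..
  also have "\<dots> = F W' * relocation_rate W' W x z a"
    using rev V' by (simp add: relocation_rate_eq)
  finally show ?thesis .
qed

lemma gibbs_weight_detailed_balance: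
  assumes W: "W \<in> AS" and W': "W' \<in> AS"
  shows "F W * q W W' = F W' * q W' W"
proof -
  have "F W * q W W' = (\<Sum>x\<in>X. \<Sum>a\<in>X. \<Sum>z\<in>X. F W' * relocation_rate W' W x z a)"
    unfolding rate_alloc_state[OF W] sum_distrib_left
    using gibbs_weight_relocation_rate_swap[OF W W'] by (intro sum.cong refl) auto
  also have "\<dots> = F W' * q W' W"
    unfolding rate_alloc_state[OF W'] sum_distrib_left by (intro sum.cong refl sum.swap)
  finally show ?thesis .
qed

lemma rate_nonneg: "W \<in> AS \<Longrightarrow> q W W' \<ge> 0"
  by (simp add: rate_alloc_state relocation_rate_nonneg sum_nonneg)

lemma rate_move_pos:
  assumes W: "W \<in> AS" and step: "(W, W') \<in> move_rel"
  shows "q W W' > 0"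
proof -
  obtain x a z where x: "x \<in> X" and a: "a \<in> X" and pos: "W x a > 0" and e: "(x, z) \<in> E"
    and free: "colsum X W z < \<beta> z" and W': "W' = move W x a z"
    using step unfolding move_rel_def by blast
  define V where "V = msub W (eunit x a)"
  have "colsum X V z \<le> colsum X W z"
    unfolding colsum_def V_def msub_def by (intro sum_mono) auto
  then have zV: "z \<in> avail X E \<beta> V x" using free e by (simp add: avail_def nbhd_def)
  moreover have "finite (avail X E \<beta> V x)"
    using finite_X edge_in_X by (auto intro: finite_subset simp: avail_def nbhd_def)
  ultimately have "p V x z > 0"
    unfolding pchoice_def by (intro divide_pos_pos sum_pos) auto
  then have "0 < relocation_rate W W' x a z"
    using zV pos nu_pos by (simp add: relocation_rate_def W' V_def)
  also have "\<dots> \<le> (\<Sum>z'\<in>X. relocation_rate W W' x a z')"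
    using edge_in_X[OF e] finite_X by (intro member_le_sum relocation_rate_nonneg) auto
  also have "\<dots> \<le> (\<Sum>a'\<in>X. \<Sum>z'\<in>X. relocation_rate W W' x a' z')"
    using a finite_X by (intro member_le_sum sum_nonneg relocation_rate_nonneg)
  also have "\<dots> \<le> (\<Sum>x'\<in>X. \<Sum>a'\<in>X. \<Sum>z'\<in>X. relocation_rate W W' x' a' z')"
    using x finite_X by (intro member_le_sum sum_nonneg relocation_rate_nonneg)
  finally show ?thesis by (simp add: rate_alloc_state[OF W])
qed

abbreviation "m \<equiv> mu X E \<alpha> \<beta> lam kc ka \<gamma>"

lemma mu_reversible: "reversible_on AS q m"
  unfolding reversible_on_def mu_eq_gibbs_weight
  using gibbs_weight_detailed_balance by (simp add: field_simps)

lemma mu_pos_sum: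
  assumes "AS \<noteq> {}"
  shows "m W > 0" and "(\<Sum>W\<in>AS. m W) = 1"
proof -
  have "(\<Sum>W\<in>AS. F W) > 0"
    by (intro sum_pos finite_alloc_states assms gibbs_weight_pos)
  then show "m W > 0" "(\<Sum>W\<in>AS. m W) = 1"
    by (simp_all add: mu_eq_gibbs_weight gibbs_weight_pos sum_divide_distrib[symmetric])
qed

end

theorem corollary1:
  fixes X :: "'a set" and E :: "('a \<times> 'a) set"
    and \<alpha> \<beta> :: "'a \<Rightarrow> nat" and lam :: "'a \<Rightarrow> real"
    and kc ka \<gamma> \<nu> :: real
    and Pall Pdis :: "('a \<Rightarrow> 'a \<Rightarrow> nat) \<Rightarrow> 'a \<Rightarrow> real"
  assumes fin: "finite X"
    and edges: "E \<subseteq> X \<times> X"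
    and kc: "kc \<ge> 0" and ka: "ka \<ge> 0" and gamma: "\<gamma> > 0" and nu: "\<nu> > 0"
    and P_nonneg: "\<And>W x. W \<in> partial_states X E \<alpha> \<beta> \<Longrightarrow> x \<in> X \<Longrightarrow>
                       Pall W x \<ge> 0 \<and> Pdis W x \<ge> 0"
    and P_sum: "\<And>W x. W \<in> partial_states X E \<alpha> \<beta> \<Longrightarrow> x \<in> X \<Longrightarrow>
                       Pall W x + Pdis W x = 1"
    and P_all0: "\<And>W x. W \<in> partial_states X E \<alpha> \<beta> \<Longrightarrow> x \<in> X \<Longrightarrow>
                       rowsum X W x = \<alpha> x \<Longrightarrow> Pall W x = 0"
    and P_dis0: "\<And>W x. W \<in> partial_states X E \<alpha> \<beta> \<Longrightarrow> x \<in> X \<Longrightarrow>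
                       rowsum X W x = 0 \<Longrightarrow> Pdis W x = 0"
    and hall: "\<And>A. A \<subseteq> X \<Longrightarrow> A \<noteq> {} \<Longrightarrow>
                 (\<Sum>x\<in>A. \<alpha> x) < (\<Sum>y\<in>nbhd_set E A. \<beta> y)"
  shows "irreducible_on (alloc_states X E \<alpha> \<beta>)
            (rate X E \<alpha> \<beta> lam kc ka \<gamma> \<nu> Pall Pdis)
       \<and> reversible_on (alloc_states X E \<alpha> \<beta>)
            (rate X E \<alpha> \<beta> lam kc ka \<gamma> \<nu> Pall Pdis) (mu X E \<alpha> \<beta> lam kc ka \<gamma>)
       \<and> invariant_prob_on (alloc_states X E \<alpha> \<beta>)
            (rate X E \<alpha> \<beta> lam kc ka \<gamma> \<nu> Pall Pdis) (mu X E \<alpha> \<beta> lam kc ka \<gamma>)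
       \<and> (\<forall>\<pi>. invariant_prob_on (alloc_states X E \<alpha> \<beta>)
                 (rate X E \<alpha> \<beta> lam kc ka \<gamma> \<nu> Pall Pdis) \<pi> \<longrightarrow>
               (\<forall>W\<in>alloc_states X E \<alpha> \<beta>. \<pi> W = mu X E \<alpha> \<beta> lam kc ka \<gamma> W))"
proof -
  interpret strict_hall_graph X E \<alpha> \<beta>
    using fin edges hall by unfold_locales
  have "Pall W x = 0 \<and> Pdis W x = 1" if "W \<in> AS" "x \<in> X" for W x
    using P_all0[of W x] P_sum[of W x] that by (auto simp: alloc_states_def)
  with nu interpret allocation_dynamics X E \<alpha> \<beta> lam kc ka \<gamma> \<nu> Pall Pdis
    by unfold_locales
  have nonempty: "AS \<noteq> {}" using exists_alloc_state by blast
  have irreducible: "irreducible_on AS q"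
  proof (rule irreducible_on_if_joinable[where R = move_rel])
    show "b \<in> AS \<and> (a \<noteq> b \<longrightarrow> q a b > 0)" if "a \<in> AS" "(a, b) \<in> move_rel" for a b
      using that rate_move_pos move_rel_rtrancl_alloc_state by blast
    show "q b a > 0" if "a \<in> AS" "b \<in> AS" "q a b > 0" for a b
      using rate_pos_sym_if_reversible[OF mu_reversible mu_pos_sum(1)[OF nonempty]] that .
  qed (rule alloc_states_joinable)
  have invariant: "invariant_prob_on AS q m"
    using mu_reversible mu_pos_sum[OF nonempty]
    by (intro reversible_on_imp_invariant_prob_on) (auto intro: less_imp_le)
  show ?thesis
    using irreducible mu_reversible invariant
      invariant_prob_on_unique[OF finite_alloc_states irreducible mu_reversible
        mu_pos_sum[OF nonempty] rate_nonneg]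
    by blast
qed

end
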